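(* Let $G$ be a graph with a linear order $<$ on $V(G)$ satisfying the X-property, and let $s<t$ be vertices with $d^*:=\operatorname{dist}(s,t)<\infty$. Then, with $d=d^*$, at least one of the following holds: (i) $\beta_s(\sigma)=\beta_t(\tau)$ for some nonnegative integers $\sigma,\tau$ with $\sigma+\tau=d$; (ii) $G$ contains an edge between $\alpha_s(\sigma)$ and $\alpha_t(\tau)$ for some nonnegative integers $\sigma,\tau$ with $\sigma+\tau=d-1$; (iii) there are nonnegative integers $\sigma,\tau$ with $\sigma+\tau=d-3$ and vertices $v\in\{\alpha_s(\sigma),\beta_s(\sigma)\}$, $w\in\{\alpha_t(\tau),\beta_t(\tau)\}$ with $v<w$, $\operatorname{rhorizon}(v)\ge t$ and $\operatorname{lhorizon}(w)\le s$.
   Context: The X-property: for all vertices $p<q<r<s$, if $\{p,r\}\in E(G)$ and $\{q,s\}\in E(G)$ then $\{p,s\}\in E(G)$. $N[v]$ is the closed neighborhood; $\operatorname{lhorizon}(v):=\min N[v]$ and $\operatorname{rhorizon}(v):=\max N[v]$ w.r.t. $<$. For an integer $k\ge 0$: $\alpha_s(k)$ (resp. $\beta_s(k)$) is the leftmost (resp. rightmost) vertex reachable from $s$ by a path of length at most $k$ using only vertices $v\le t$; $\alpha_t(k)$ (resp. $\beta_t(k)$) is the rightmost (resp. leftmost) vertex reachable from $t$ by a path of length at most $k$ using only vertices $v\ge s$. *)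

theory Defs
  imports Main
begin

definition simple_graph :: "'a set \<Rightarrow> 'a set set \<Rightarrow> bool" where
  "simple_graph V E \<longleftrightarrow> finite V \<and>
     (\<forall>e\<in>E. \<exists>u v. u \<noteq> v \<and> u \<in> V \<and> v \<in> V \<and> e = {u, v})"

definition X_property :: "'a::linorder set \<Rightarrow> 'a set set \<Rightarrow> bool" where
  "X_property V E \<longleftrightarrow> (\<forall>p\<in>V. \<forall>q\<in>V. \<forall>r\<in>V. \<forall>s\<in>V.
      p < q \<and> q < r \<and> r < s \<and> {p, r} \<in> E \<and> {q, s} \<in> E \<longrightarrow> {p, s} \<in> E)"

definition is_path :: "'a set \<Rightarrow> 'a set set \<Rightarrow> 'a list \<Rightarrow> bool" where
  "is_path V E xs \<longleftrightarrow> xs \<noteq> [] \<and> set xs \<subseteq> V \<and> distinct xs \<and>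
     (\<forall>i. i + 1 < length xs \<longrightarrow> {xs ! i, xs ! (i + 1)} \<in> E)"

definition reach_within :: "'a set \<Rightarrow> 'a set set \<Rightarrow> 'a set \<Rightarrow> nat \<Rightarrow> 'a \<Rightarrow> 'a \<Rightarrow> bool" where
  "reach_within V E U k x y \<longleftrightarrow> (\<exists>xs. is_path V E xs \<and> set xs \<subseteq> U \<and>
      hd xs = x \<and> last xs = y \<and> length xs \<le> k + 1)"

text \<open>Distance (meaningful when some path from x to y exists).\<close>
definition graph_dist :: "'a set \<Rightarrow> 'a set set \<Rightarrow> 'a \<Rightarrow> 'a \<Rightarrow> nat" where
  "graph_dist V E x y = (LEAST k. reach_within V E V k x y)"

definition lhorizon :: "'a set \<Rightarrow> 'a set set \<Rightarrow> 'a::linorder \<Rightarrow> 'a" where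
  "lhorizon V E v = Min (insert v {u\<in>V. {u, v} \<in> E})"

definition rhorizon :: "'a set \<Rightarrow> 'a set set \<Rightarrow> 'a::linorder \<Rightarrow> 'a" where
  "rhorizon V E v = Max (insert v {u\<in>V. {u, v} \<in> E})"

definition alpha_s :: "'a set \<Rightarrow> 'a set set \<Rightarrow> 'a::linorder \<Rightarrow> 'a \<Rightarrow> nat \<Rightarrow> 'a" where
  "alpha_s V E s t k = Min {y. reach_within V E {v\<in>V. v \<le> t} k s y}"

definition beta_s :: "'a set \<Rightarrow> 'a set set \<Rightarrow> 'a::linorder \<Rightarrow> 'a \<Rightarrow> nat \<Rightarrow> 'a" where
  "beta_s V E s t k = Max {y. reach_within V E {v\<in>V. v \<le> t} k s y}"

definition alpha_t :: "'a set \<Rightarrow> 'a set set \<Rightarrow> 'a::linorder \<Rightarrow> 'a \<Rightarrow> nat \<Rightarrow> 'a" where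
  "alpha_t V E s t k = Max {y. reach_within V E {v\<in>V. s \<le> v} k t y}"

definition beta_t :: "'a set \<Rightarrow> 'a set set \<Rightarrow> 'a::linorder \<Rightarrow> 'a \<Rightarrow> nat \<Rightarrow> 'a" where
  "beta_t V E s t k = Min {y. reach_within V E {v\<in>V. s \<le> v} k t y}"

end

theory Submission
  imports Defs
begin

(* The proof works with walks instead of paths (shortcutting a walk yields a path that is
   not longer) and rests on one consequence of the X-property, walk_end_adjacent_upper and
   its mirror image: let a walk of length at most k from r end in w and pass over a vertex v
   adjacent to some y beyond everything reachable from r within k steps. The edge on which
   the walk jumps over v is then adjacent to y as well; if no vertex reachable in fewer than
   k steps is adjacent to y, this edge must end in w, so w is adjacent to y.

   Consequently beta_s and beta_t (d - _) cannot pass each other: either they meet, which is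
   (i), or beta_s sigma < beta_t (d - sigma) for all sigma <= d. Then a shortest s-t path
   leaves the interval [s, t] both above t and below s. If its first vertex above t directly
   follows its last vertex below s, moving the ends of that edge to alpha_s and alpha_t
   gives (ii). Otherwise the exit edge above t and the entry edge from below s are moved to
   extremal vertices, and the X-property shows that these have the horizons of (iii). *)

lemma successively_iff_nth:
  "successively P xs \<longleftrightarrow> (\<forall>i. i + 1 < length xs \<longrightarrow> P (xs ! i) (xs ! (i + 1)))"
  by (induction P xs rule: successively.induct) (auto simp: All_less_Suc2)

lemma is_path_iff:
  "is_path V E xs \<longleftrightarrow>
     xs \<noteq> [] \<and> set xs \<subseteq> V \<and> distinct xs \<and> successively (\<lambda>u v. {u, v} \<in> E) xs"
  by (simp add: is_path_def successively_iff_nth)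

lemma simple_graph_edgeD:
  assumes "simple_graph V E" and "{x, y} \<in> E"
  shows "x \<in> V" "y \<in> V"
proof -
  obtain u v where "u \<in> V" "v \<in> V" "{x, y} = {u, v}"
    using assms unfolding simple_graph_def by blast
  then show "x \<in> V" "y \<in> V" by (auto simp: doubleton_eq_iff)
qed

inductive walk_le :: "'a set set \<Rightarrow> 'a set \<Rightarrow> nat \<Rightarrow> 'a \<Rightarrow> 'a \<Rightarrow> bool"
  for E :: "'a set set" and U :: "'a set" where
  refl: "x \<in> U \<Longrightarrow> walk_le E U k x x"
| step: "walk_le E U k x p \<Longrightarrow> {p, y} \<in> E \<Longrightarrow> y \<in> U \<Longrightarrow> walk_le E U (Suc k) x y"

lemma walk_le_0_iff: "walk_le E U 0 x y \<longleftrightarrow> x = y \<and> x \<in> U"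
  by (auto elim: walk_le.cases intro: walk_le.refl)

lemma walk_le_SucE:
  assumes "walk_le E U (Suc k) x y"
  obtains "x = y" "x \<in> U" | p where "walk_le E U k x p" "{p, y} \<in> E" "y \<in> U"
  using assms by (cases rule: walk_le.cases) auto

lemma walk_le_endpoints: "walk_le E U k x y \<Longrightarrow> x \<in> U \<and> y \<in> U"
  by (induction rule: walk_le.induct) auto

lemma walk_le_mono: "walk_le E U k x y \<Longrightarrow> k \<le> k' \<Longrightarrow> walk_le E U k' x y"
proof (induction arbitrary: k' rule: walk_le.induct)
  case (refl x k)
  then show ?case by (simp add: walk_le.refl)
next
  case (step k x p y)
  then obtain k'' where "k' = Suc k''" "k \<le> k''" by (cases k') auto
  with step show ?case by (auto intro: walk_le.step)
qed

lemma walk_le_trans: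
  assumes "walk_le E U i x y" and "walk_le E U j y z"
  shows "walk_le E U (i + j) x z"
  using assms(2,1)
proof (induction rule: walk_le.induct)
  case (refl y k)
  then show ?case using walk_le_mono by fastforce
next
  case (step k y p z)
  then show ?case by (auto intro: walk_le.step)
qed

lemma walk_le_Cons:
  assumes "{x, y} \<in> E" and "x \<in> U" and "walk_le E U k y z"
  shows "walk_le E U (Suc k) x z"
proof -
  have "walk_le E U (Suc 0) x y"
    using assms walk_le_endpoints by (metis walk_le.refl walk_le.step)
  with assms(3) show ?thesis using walk_le_trans by fastforce
qed

lemma walk_le_sym: "walk_le E U k x y \<Longrightarrow> walk_le E U k y x"
proof (induction rule: walk_le.induct)
  case (refl x k)
  then show ?case by (simp add: walk_le.refl)
next
  case (step k x p y)
  then show ?case by (metis insert_commute walk_le_Cons)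
qed

lemma walk_le_in_graph:
  assumes "simple_graph V E" and "walk_le E U k x y" and "x \<in> V"
  shows "walk_le E V k x y"
  using assms(2,3)
proof induction
  case (refl x k)
  then show ?case by (simp add: walk_le.refl)
next
  case (step k x p y)
  then show ?case using simple_graph_edgeD[OF assms(1) step.hyps(2)] by (auto intro: walk_le.step)
qed

lemma finite_walk_le_ends: "finite U \<Longrightarrow> finite {y. walk_le E U k x y}"
  by (rule finite_subset[of _ U]) (auto dest: walk_le_endpoints)

lemma walk_le_of_successively:
  assumes "successively (\<lambda>u v. {u, v} \<in> E) xs" and "xs \<noteq> []" and "set xs \<subseteq> U"
  shows "walk_le E U (length xs - 1) (hd xs) (last xs)"
  using assms
proof (induction xs rule: rev_induct)
  case (snoc y xs)
  show ?case
  proof (cases "xs = []")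
    case True
    then show ?thesis using snoc.prems by (auto intro: walk_le.refl)
  next
    case False
    then have "walk_le E U (length xs - 1) (hd xs) (last xs)"
      using snoc by (simp add: successively_append_iff)
    moreover have "{last xs, y} \<in> E" using snoc.prems False by (simp add: successively_append_iff)
    ultimately have "walk_le E U (Suc (length xs - 1)) (hd xs) y"
      using snoc.prems by (auto intro: walk_le.step)
    then show ?thesis using False by simp
  qed
qed simp

lemma path_of_walk_le:
  assumes "walk_le E U k x y" and "U \<subseteq> V"
  shows "\<exists>xs. is_path V E xs \<and> set xs \<subseteq> U \<and> hd xs = x \<and> last xs = y \<and> length xs \<le> k + 1"
  using assms(1)
proof induction
  case (refl x k)
  then show ?case using assms(2) by (intro exI[of _ "[x]"]) (auto simp: is_path_iff)
next
  case (step k x p y)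
  then obtain xs where xs: "is_path V E xs" "set xs \<subseteq> U" "hd xs = x" "last xs = p"
    "length xs \<le> k + 1" by blast
  show ?case
  proof (cases "y \<in> set xs")
    case True
    then obtain ys zs where "xs = (ys @ [y]) @ zs" by (auto dest: split_list)
    with xs have "is_path V E (ys @ [y])" "hd (ys @ [y]) = x"
      by (auto simp: is_path_iff successively_append_iff hd_append)
    with xs \<open>xs = (ys @ [y]) @ zs\<close> show ?thesis by (intro exI[of _ "ys @ [y]"]) auto
  next
    case False
    have "is_path V E (xs @ [y])"
      using xs(1,4) False step.hyps(2,3) assms(2) by (auto simp: is_path_iff successively_append_iff)
    with xs step.hyps(3) show ?thesis by (intro exI[of _ "xs @ [y]"]) (auto simp: is_path_iff)
  qed
qed

lemma reach_within_iff_walk_le: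
  assumes "U \<subseteq> V"
  shows "reach_within V E U k x y \<longleftrightarrow> walk_le E U k x y"
proof
  assume "reach_within V E U k x y"
  then obtain xs where "is_path V E xs" "set xs \<subseteq> U" "hd xs = x" "last xs = y" "length xs \<le> k + 1"
    unfolding reach_within_def by blast
  moreover from this have "walk_le E U (length xs - 1) x y"
    using walk_le_of_successively[of E xs U] by (auto simp: is_path_iff)
  ultimately show "walk_le E U k x y"
    using walk_le_mono[of E U "length xs - 1" x y k] by simp
next
  assume "walk_le E U k x y"
  from path_of_walk_le[OF this assms] show "reach_within V E U k x y"
    unfolding reach_within_def by blast
qed

lemma walk_le_sequenceE:
  assumes "walk_le E U k x y"
  obtains j f where "j \<le> k" "f 0 = x" "f j = y"
    "\<forall>i<j. {f i, f (Suc i)} \<in> E" "\<forall>i\<le>j. f i \<in> U"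
proof -
  from assms have "\<exists>j f. j \<le> k \<and> f 0 = x \<and> f j = y \<and>
      (\<forall>i<j. {f i, f (Suc i)} \<in> E) \<and> (\<forall>i\<le>j. f i \<in> U)"
  proof induction
    case (refl x k)
    then show ?case by (intro exI[of _ 0] exI[of _ "\<lambda>_. x"]) auto
  next
    case (step k x p y)
    then obtain j f where "j \<le> k" "f 0 = x" "f j = p"
      "\<forall>i<j. {f i, f (Suc i)} \<in> E" "\<forall>i\<le>j. f i \<in> U" by blast
    with step.hyps(2,3) show ?case
      by (intro exI[of _ "Suc j"] exI[of _ "f(Suc j := y)"]) (auto simp: less_Suc_eq le_Suc_eq)
  qed
  with that show ?thesis by blast
qed

lemma walk_le_of_sequence:
  assumes "i \<le> j"
    and "\<And>l. i \<le> l \<Longrightarrow> l < j \<Longrightarrow> {f l, f (Suc l)} \<in> E"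
    and "\<And>l. i \<le> l \<Longrightarrow> l \<le> j \<Longrightarrow> f l \<in> U"
  shows "walk_le E U (j - i) (f i) (f j)"
  using assms(1)
proof (induction rule: dec_induct)
  case base
  then show ?case using assms(1) assms(3)[of i] by (simp add: walk_le.refl)
next
  case (step n)
  then have "walk_le E U (Suc (n - i)) (f i) (f (Suc n))"
    using assms(2,3) by (auto intro: walk_le.step)
  then show ?case using step.hyps(1) by (simp add: Suc_diff_le)
qed

lemma walk_le_crosses:
  fixes x :: "'a::linorder"
  assumes "walk_le E U (Suc k) a b" and "a < x \<and> x < b \<or> b < x \<and> x < a"
  shows "walk_le E U k a x \<or> (\<exists>c e. {c, e} \<in> E \<and> c < x \<and> x < e
           \<and> (c = b \<or> walk_le E U k a c) \<and> (e = b \<or> walk_le E U k a e))"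
proof -
  have "walk_le E U (n - 1) a x \<or> (\<exists>c e. {c, e} \<in> E \<and> c < x \<and> x < e
           \<and> (c = b \<or> walk_le E U (n - 1) a c) \<and> (e = b \<or> walk_le E U (n - 1) a e))"
    if "walk_le E U n a b" and "a < x \<and> x < b \<or> b < x \<and> x < a" for n b
    using that
  proof (induction rule: walk_le.induct)
    case (refl a n)
    then show ?case by auto
  next
    case (step k a p b)
    consider "p = x" | "a < x \<and> p < x \<or> x < a \<and> x < p" | "a < x \<and> x < p \<or> p < x \<and> x < a"
      using step.prems by fastforce
    then show ?case
    proof cases
      case 1
      then show ?thesis using step.hyps(1) by simp
    next
      case 2
      then show ?thesis
      proof
        assume "a < x \<and> p < x"
        then show ?thesis using step.hyps(1,2) step.prems by auto
      next
        assume "x < a \<and> x < p"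
        then show ?thesis using step.hyps(1,2) step.prems by (auto simp: insert_commute)
      qed
    next
      case 3
      with step.IH show ?thesis using walk_le_mono[of E U "k - 1" a _ k] step.hyps(1) by fastforce
    qed
  qed
  from this[OF assms] show ?thesis by simp
qed

lemma X_property_edge:
  assumes "X_property V E" and "simple_graph V E"
    and "p < q" "q < r" "r < z" and "{p, r} \<in> E" "{q, z} \<in> E"
  shows "{p, z} \<in> E"
  using assms simple_graph_edgeD[OF assms(2)] unfolding X_property_def by blast

lemma walk_end_adjacent_upper:
  fixes y :: "'a::linorder"
  assumes X: "X_property V E" and G: "simple_graph V E"
    and walk: "walk_le E U k r w"
    and between: "r \<le> v \<and> v \<le> w \<or> w \<le> v \<and> v \<le> r"
    and vy: "{v, y} \<in> E"
    and below: "\<And>u. walk_le E U k r u \<Longrightarrow> u < y"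
    and far: "\<And>i u. walk_le E U i r u \<Longrightarrow> {u, y} \<in> E \<Longrightarrow> k \<le> i"
  shows "w \<le> v \<and> {w, y} \<in> E"
proof (cases "v = w")
  case True
  then show ?thesis using vy by simp
next
  case False
  have "v \<noteq> r"
  proof
    assume "v = r"
    then have "k = 0" using far[of 0 r] walk_le_endpoints[OF walk] vy by (simp add: walk_le.refl)
    then show False using walk False \<open>v = r\<close> by (simp add: walk_le_0_iff)
  qed
  with between False have strict: "r < v \<and> v < w \<or> w < v \<and> v < r" by auto
  then obtain k' where k: "k = Suc k'" using walk by (cases k) (auto simp: walk_le_0_iff)
  from walk_le_crosses[OF walk[unfolded k] strict]
  consider "walk_le E U k' r v"
    | c e where "{c, e} \<in> E" "c < v" "v < e" "c = w \<or> walk_le E U k' r c" "e = w \<or> walk_le E U k' r e"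
    by blast
  then show ?thesis
  proof cases
    case 1
    then show ?thesis using far[OF 1 vy] k by simp
  next
    case 2
    have "walk_le E U k r e" using 2(5) walk k walk_le_mono[of E U k' r e k] by auto
    then have cy: "{c, y} \<in> E" using X_property_edge[OF X G 2(2,3) below 2(1) vy] by simp
    then have "c = w" using 2(4) far k by fastforce
    then show ?thesis using cy 2(2) by simp
  qed
qed

lemma walk_end_adjacent_lower:
  fixes y :: "'a::linorder"
  assumes X: "X_property V E" and G: "simple_graph V E"
    and walk: "walk_le E U k r w"
    and between: "r \<le> v \<and> v \<le> w \<or> w \<le> v \<and> v \<le> r"
    and yv: "{y, v} \<in> E"
    and above: "\<And>u. walk_le E U k r u \<Longrightarrow> y < u"
    and far: "\<And>i u. walk_le E U i r u \<Longrightarrow> {y, u} \<in> E \<Longrightarrow> k \<le> i"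
  shows "v \<le> w \<and> {y, w} \<in> E"
proof (cases "v = w")
  case True
  then show ?thesis using yv by simp
next
  case False
  have "v \<noteq> r"
  proof
    assume "v = r"
    then have "k = 0" using far[of 0 r] walk_le_endpoints[OF walk] yv by (simp add: walk_le.refl)
    then show False using walk False \<open>v = r\<close> by (simp add: walk_le_0_iff)
  qed
  with between False have strict: "r < v \<and> v < w \<or> w < v \<and> v < r" by auto
  then obtain k' where k: "k = Suc k'" using walk by (cases k) (auto simp: walk_le_0_iff)
  from walk_le_crosses[OF walk[unfolded k] strict]
  consider "walk_le E U k' r v"
    | c e where "{c, e} \<in> E" "c < v" "v < e" "c = w \<or> walk_le E U k' r c" "e = w \<or> walk_le E U k' r e"
    by blast
  then show ?thesis
  proof cases
    case 1
    then show ?thesis using far[OF 1 yv] k by simp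
  next
    case 2
    have "walk_le E U k r c" using 2(4) walk k walk_le_mono[of E U k' r c k] by auto
    then have ye: "{y, e} \<in> E" using X_property_edge[OF X G above 2(2,3) yv 2(1)] by simp
    then have "e = w" using 2(5) far k by fastforce
    then show ?thesis using ye 2(3) by simp
  qed
qed

lemma le_rhorizon:
  assumes "simple_graph V E" and "{u, v} \<in> E"
  shows "u \<le> rhorizon V E v"
  unfolding rhorizon_def
proof (rule Max_ge)
  show "finite (insert v {u \<in> V. {u, v} \<in> E})" using assms(1) by (simp add: simple_graph_def)
  show "u \<in> insert v {u \<in> V. {u, v} \<in> E}" using simple_graph_edgeD(1)[OF assms] assms(2) by simp
qed

lemma lhorizon_le:
  assumes "simple_graph V E" and "{u, v} \<in> E"
  shows "lhorizon V E v \<le> u"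
  unfolding lhorizon_def
proof (rule Min_le)
  show "finite (insert v {u \<in> V. {u, v} \<in> E})" using assms(1) by (simp add: simple_graph_def)
  show "u \<in> insert v {u \<in> V. {u, v} \<in> E}" using simple_graph_edgeD(1)[OF assms] assms(2) by simp
qed

locale X_graph_pair =
  fixes V :: "'a::linorder set" and E :: "'a set set" and s t :: 'a
  assumes simple: "simple_graph V E" and X: "X_property V E"
    and s_in_V: "s \<in> V" and t_in_V: "t \<in> V" and s_less_t: "s < t"
    and connected: "\<exists>k. reach_within V E V k s t"
begin

abbreviation "d \<equiv> graph_dist V E s t"
abbreviation "\<alpha>\<^sub>s \<equiv> alpha_s V E s t"
abbreviation "\<beta>\<^sub>s \<equiv> beta_s V E s t"
abbreviation "\<alpha>\<^sub>t \<equiv> alpha_t V E s t"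
abbreviation "\<beta>\<^sub>t \<equiv> beta_t V E s t"
abbreviation "reach_s k x \<equiv> walk_le E {v \<in> V. v \<le> t} k s x"
abbreviation "reach_t k x \<equiv> walk_le E {v \<in> V. s \<le> v} k t x"

lemma finite_V: "finite V"
  using simple by (simp add: simple_graph_def)

lemma reach_s_le_t: "reach_s k x \<Longrightarrow> x \<le> t"
  by (auto dest: walk_le_endpoints)

lemma s_le_reach_t: "reach_t k x \<Longrightarrow> s \<le> x"
  by (auto dest: walk_le_endpoints)

lemma
  shows reach_s_alpha_s: "reach_s k (\<alpha>\<^sub>s k)" and reach_s_beta_s: "reach_s k (\<beta>\<^sub>s k)"
    and alpha_s_le: "reach_s k x \<Longrightarrow> \<alpha>\<^sub>s k \<le> x" and le_beta_s: "reach_s k x \<Longrightarrow> x \<le> \<beta>\<^sub>s k"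
proof -
  let ?R = "{x. reach_s k x}"
  have eq: "reach_within V E {v \<in> V. v \<le> t} k s y \<longleftrightarrow> reach_s k y" for y
    by (rule reach_within_iff_walk_le) auto
  have "finite ?R" using finite_V by (intro finite_walk_le_ends) auto
  moreover have "s \<in> ?R" using s_in_V s_less_t by (auto intro: walk_le.refl)
  ultimately show "reach_s k (\<alpha>\<^sub>s k)" "reach_s k (\<beta>\<^sub>s k)"
    "reach_s k x \<Longrightarrow> \<alpha>\<^sub>s k \<le> x" "reach_s k x \<Longrightarrow> x \<le> \<beta>\<^sub>s k"
    unfolding alpha_s_def beta_s_def eq using Min_in Max_in by auto
qed

lemma
  shows reach_t_alpha_t: "reach_t k (\<alpha>\<^sub>t k)" and reach_t_beta_t: "reach_t k (\<beta>\<^sub>t k)"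
    and le_alpha_t: "reach_t k x \<Longrightarrow> x \<le> \<alpha>\<^sub>t k" and beta_t_le: "reach_t k x \<Longrightarrow> \<beta>\<^sub>t k \<le> x"
proof -
  let ?R = "{x. reach_t k x}"
  have eq: "reach_within V E {v \<in> V. s \<le> v} k t y \<longleftrightarrow> reach_t k y" for y
    by (rule reach_within_iff_walk_le) auto
  have "finite ?R" using finite_V by (intro finite_walk_le_ends) auto
  moreover have "t \<in> ?R" using t_in_V s_less_t by (auto intro: walk_le.refl)
  ultimately show "reach_t k (\<alpha>\<^sub>t k)" "reach_t k (\<beta>\<^sub>t k)"
    "reach_t k x \<Longrightarrow> x \<le> \<alpha>\<^sub>t k" "reach_t k x \<Longrightarrow> \<beta>\<^sub>t k \<le> x"
    unfolding alpha_t_def beta_t_def eq using Min_in Max_in by auto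
qed

lemma beta_s_0: "\<beta>\<^sub>s 0 = s"
  using reach_s_beta_s[of 0] by (simp add: walk_le_0_iff)

lemma beta_t_0: "\<beta>\<^sub>t 0 = t"
  using reach_t_beta_t[of 0] by (simp add: walk_le_0_iff)

lemma beta_t_antimono: "k \<le> k' \<Longrightarrow> \<beta>\<^sub>t k' \<le> \<beta>\<^sub>t k"
  by (rule beta_t_le[OF walk_le_mono[OF reach_t_beta_t]])

lemma walk_le_dist: "walk_le E V d s t"
  using LeastI_ex[OF connected] unfolding graph_dist_def by (simp add: reach_within_iff_walk_le)

lemma dist_le:
  assumes "walk_le E U i s x" and "walk_le E U' j t x"
  shows "d \<le> i + j"
proof -
  have "walk_le E V (i + j) s t"
    using walk_le_trans[OF walk_le_in_graph[OF simple assms(1) s_in_V]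
        walk_le_sym[OF walk_le_in_graph[OF simple assms(2) t_in_V]]] .
  then show ?thesis
    unfolding graph_dist_def by (intro Least_le) (simp add: reach_within_iff_walk_le)
qed

lemma dist_le_edge:
  assumes "walk_le E U i s x" and "walk_le E U' j t y" and "{x, y} \<in> E"
  shows "d \<le> i + j + 1"
proof -
  have "walk_le E V (Suc i) s y"
    using walk_le_in_graph[OF simple assms(1) s_in_V] assms(3) simple_graph_edgeD[OF simple assms(3)]
    by (auto intro: walk_le.step)
  from dist_le[OF this assms(2)] show ?thesis by simp
qed

definition separated :: bool where
  "separated \<longleftrightarrow> (\<forall>\<sigma>\<le>d. \<beta>\<^sub>s \<sigma> < \<beta>\<^sub>t (d - \<sigma>))"

lemma separated_less:
  assumes "separated" and "\<sigma> + \<tau> \<le> d" and "reach_s \<sigma> x" and "reach_t \<tau> y"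
  shows "x < y"
proof -
  have "x \<le> \<beta>\<^sub>s \<sigma>" using le_beta_s[OF assms(3)] .
  also have "\<dots> < \<beta>\<^sub>t (d - \<sigma>)" using assms(1,2) unfolding separated_def by simp
  also have "\<dots> \<le> \<beta>\<^sub>t \<tau>" using assms(2) by (simp add: beta_t_antimono)
  also have "\<dots> \<le> y" using beta_t_le[OF assms(4)] .
  finally show ?thesis .
qed

lemma beta_s_Suc_le:
  assumes "Suc \<sigma> \<le> d" and gap: "\<beta>\<^sub>s \<sigma> < \<beta>\<^sub>t (d - \<sigma>)"
  shows "\<beta>\<^sub>s (Suc \<sigma>) \<le> \<beta>\<^sub>t (d - Suc \<sigma>)"
proof (rule ccontr)
  let ?u = "\<beta>\<^sub>s (Suc \<sigma>)" and ?b = "\<beta>\<^sub>t (d - Suc \<sigma>)"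
  assume "\<not> ?u \<le> ?b"
  then have bu: "?b < ?u" by simp
  have gap': "\<beta>\<^sub>s \<sigma> < ?b"
    using gap beta_t_antimono[of "d - Suc \<sigma>" "d - \<sigma>"] by (simp add: diff_le_mono2)
  have "\<not> reach_s \<sigma> ?u" using le_beta_s gap' bu by fastforce
  with reach_s_beta_s[of "Suc \<sigma>"] obtain p where p: "reach_s \<sigma> p" "{p, ?u} \<in> E"
    by (cases rule: walk_le_SucE) (auto intro: walk_le.refl)
  have pb: "p < ?b" using le_beta_s[OF p(1)] gap' by simp
  have "?u \<noteq> t"
  proof
    assume "?u = t"
    then have "d \<le> Suc \<sigma> + 0"
      using dist_le[OF reach_s_beta_s, of V 0] t_in_V by (simp add: walk_le.refl)
    then show False using \<open>?u = t\<close> bu assms(1) by (simp add: beta_t_0)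
  qed
  then have "?u < t" using reach_s_le_t[OF reach_s_beta_s] by (simp add: order_le_neq_trans)
  have "?u \<le> ?b"
  proof (rule conjunct1[OF walk_end_adjacent_lower[OF X simple reach_t_beta_t]])
    show "t \<le> ?u \<and> ?u \<le> ?b \<or> ?b \<le> ?u \<and> ?u \<le> t" using bu \<open>?u < t\<close> by (simp add: less_imp_le)
    show "{p, ?u} \<in> E" by (fact p(2))
    show "p < x" if "reach_t (d - Suc \<sigma>) x" for x using pb beta_t_le[OF that] by simp
    show "d - Suc \<sigma> \<le> i" if "reach_t i x" "{p, x} \<in> E" for i x
      using dist_le_edge[OF p(1) that] by simp
  qed
  then show False using bu by simp
qed

lemma meet_or_separated: "(\<exists>\<sigma>\<le>d. \<beta>\<^sub>s \<sigma> = \<beta>\<^sub>t (d - \<sigma>)) \<or> separated"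
proof -
  have "(\<exists>\<sigma>'\<le>\<sigma>. \<beta>\<^sub>s \<sigma>' = \<beta>\<^sub>t (d - \<sigma>')) \<or> (\<forall>\<sigma>'\<le>\<sigma>. \<beta>\<^sub>s \<sigma>' < \<beta>\<^sub>t (d - \<sigma>'))"
    if "\<sigma> \<le> d" for \<sigma>
    using that
  proof (induction \<sigma>)
    case 0
    have "\<beta>\<^sub>s 0 \<le> \<beta>\<^sub>t d" using s_le_reach_t[OF reach_t_beta_t] by (simp add: beta_s_0)
    then show ?case by (auto simp: order.order_iff_strict)
  next
    case (Suc \<sigma>)
    then consider "\<exists>\<sigma>'\<le>\<sigma>. \<beta>\<^sub>s \<sigma>' = \<beta>\<^sub>t (d - \<sigma>')" | "\<forall>\<sigma>'\<le>\<sigma>. \<beta>\<^sub>s \<sigma>' < \<beta>\<^sub>t (d - \<sigma>')"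
      by fastforce
    then show ?case
    proof cases
      case 1
      then show ?thesis using le_SucI by blast
    next
      case 2
      then have "\<beta>\<^sub>s (Suc \<sigma>) \<le> \<beta>\<^sub>t (d - Suc \<sigma>)" using Suc.prems beta_s_Suc_le by simp
      then consider "\<beta>\<^sub>s (Suc \<sigma>) = \<beta>\<^sub>t (d - Suc \<sigma>)" | "\<beta>\<^sub>s (Suc \<sigma>) < \<beta>\<^sub>t (d - Suc \<sigma>)"
        by fastforce
      then show ?thesis
      proof cases
        case 1
        then show ?thesis by blast
      next
        case 2
        with \<open>\<forall>\<sigma>'\<le>\<sigma>. \<beta>\<^sub>s \<sigma>' < \<beta>\<^sub>t (d - \<sigma>')\<close> show ?thesis by (metis le_Suc_eq)
      qed
    qed
  qed
  from this[of d] show ?thesis unfolding separated_def by simp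
qed

lemma alpha_edge_of_crossing_edge:
  assumes a: "reach_s \<sigma> a" and b: "reach_t \<tau> b" and ab: "{a, b} \<in> E"
    and "a < s" and "t < b" and len: "\<sigma> + \<tau> + 1 = d"
  shows "{\<alpha>\<^sub>s \<sigma>, \<alpha>\<^sub>t \<tau>} \<in> E"
proof -
  have ab': "{\<alpha>\<^sub>s \<sigma>, b} \<in> E"
  proof (rule conjunct2[OF walk_end_adjacent_upper[OF X simple reach_s_alpha_s _ ab]])
    show "s \<le> a \<and> a \<le> \<alpha>\<^sub>s \<sigma> \<or> \<alpha>\<^sub>s \<sigma> \<le> a \<and> a \<le> s"
      using alpha_s_le[OF a] \<open>a < s\<close> by (simp add: less_imp_le)
    show "u < b" if "reach_s \<sigma> u" for u using reach_s_le_t[OF that] \<open>t < b\<close> by simp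
    show "\<sigma> \<le> i" if "reach_s i u" "{u, b} \<in> E" for i u
      using dist_le_edge[OF that(1) b that(2)] len by simp
  qed
  show ?thesis
  proof (rule conjunct2[OF walk_end_adjacent_lower[OF X simple reach_t_alpha_t _ ab']])
    show "t \<le> b \<and> b \<le> \<alpha>\<^sub>t \<tau> \<or> \<alpha>\<^sub>t \<tau> \<le> b \<and> b \<le> t"
      using le_alpha_t[OF b] \<open>t < b\<close> by (simp add: less_imp_le)
    show "\<alpha>\<^sub>s \<sigma> < u" if "reach_t \<tau> u" for u
      using alpha_s_le[OF a] \<open>a < s\<close> s_le_reach_t[OF that] by simp
    show "\<tau> \<le> i" if "reach_t i u" "{\<alpha>\<^sub>s \<sigma>, u} \<in> E" for i u
      using dist_le_edge[OF reach_s_alpha_s that] len by simp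
  qed
qed

lemma exit_above_adjacent:
  assumes v: "reach_s \<sigma> v" and vy: "{v, y} \<in> E" and "t < y"
    and y: "walk_le E U j t y" and len: "\<sigma> + j + 1 = d"
  shows "\<exists>v'\<in>{\<alpha>\<^sub>s \<sigma>, \<beta>\<^sub>s \<sigma>}. {v', y} \<in> E"
proof -
  define w where "w = (if v \<le> s then \<alpha>\<^sub>s \<sigma> else \<beta>\<^sub>s \<sigma>)"
  have "{w, y} \<in> E"
  proof (rule conjunct2[OF walk_end_adjacent_upper[OF X simple _ _ vy]])
    show "reach_s \<sigma> w" unfolding w_def by (simp add: reach_s_alpha_s reach_s_beta_s)
    show "s \<le> v \<and> v \<le> w \<or> w \<le> v \<and> v \<le> s"
      unfolding w_def using alpha_s_le[OF v] le_beta_s[OF v] by auto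
    show "u < y" if "reach_s \<sigma> u" for u using reach_s_le_t[OF that] \<open>t < y\<close> by simp
    show "\<sigma> \<le> i" if "reach_s i u" "{u, y} \<in> E" for i u
      using dist_le_edge[OF that(1) y that(2)] len by simp
  qed
  then show ?thesis unfolding w_def by (auto split: if_splits)
qed

lemma entry_below_adjacent:
  assumes w: "reach_t \<tau> w" and zw: "{z, w} \<in> E" and "z < s"
    and z: "walk_le E U j s z" and len: "j + \<tau> + 1 = d"
  shows "\<exists>w'\<in>{\<alpha>\<^sub>t \<tau>, \<beta>\<^sub>t \<tau>}. {z, w'} \<in> E"
proof -
  define v where "v = (if t \<le> w then \<alpha>\<^sub>t \<tau> else \<beta>\<^sub>t \<tau>)"
  have "{z, v} \<in> E"
  proof (rule conjunct2[OF walk_end_adjacent_lower[OF X simple _ _ zw]])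
    show "reach_t \<tau> v" unfolding v_def by (simp add: reach_t_alpha_t reach_t_beta_t)
    show "t \<le> w \<and> w \<le> v \<or> v \<le> w \<and> w \<le> t"
      unfolding v_def using le_alpha_t[OF w] beta_t_le[OF w] by auto
    show "z < u" if "reach_t \<tau> u" for u using s_le_reach_t[OF that] \<open>z < s\<close> by simp
    show "\<tau> \<le> i" if "reach_t i u" "{z, u} \<in> E" for i u
      using dist_le_edge[OF z that] len by simp
  qed
  then show ?thesis unfolding v_def by (auto split: if_splits)
qed

lemma separated_below_neighbour_lt:
  assumes sep: "separated" and v: "reach_s \<sigma> v"
    and w: "reach_t \<tau> w" and zw: "{z, w} \<in> E" and "z < s"
    and len: "\<sigma> + \<tau> + 3 \<le> d"
  shows "z < v"
proof (rule ccontr)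
  assume "\<not> z < v"
  have "{v, w} \<in> E"
  proof (rule conjunct2[OF walk_end_adjacent_upper[OF X simple v _ zw]])
    show "s \<le> z \<and> z \<le> v \<or> v \<le> z \<and> z \<le> s" using \<open>\<not> z < v\<close> \<open>z < s\<close> by auto
    show "u < w" if "reach_s \<sigma> u" for u using separated_less[OF sep _ that w] len by simp
    show "\<sigma> \<le> i" if "reach_s i u" "{u, w} \<in> E" for i u
      using dist_le_edge[OF that(1) w that(2)] len by simp
  qed
  then show False using dist_le_edge[OF v w] len by simp
qed

lemma separated_lt_above_neighbour:
  assumes sep: "separated" and v: "reach_s \<sigma> v" and vy: "{v, y} \<in> E" and "t < y"
    and w: "reach_t \<tau> w" and len: "\<sigma> + \<tau> + 3 \<le> d"
  shows "w < y"
proof (rule ccontr)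
  assume "\<not> w < y"
  have "{v, w} \<in> E"
  proof (rule conjunct2[OF walk_end_adjacent_lower[OF X simple w _ vy]])
    show "t \<le> y \<and> y \<le> w \<or> w \<le> y \<and> y \<le> t" using \<open>\<not> w < y\<close> \<open>t < y\<close> by auto
    show "v < u" if "reach_t \<tau> u" for u using separated_less[OF sep _ v that] len by simp
    show "\<tau> \<le> i" if "reach_t i u" "{v, u} \<in> E" for i u
      using dist_le_edge[OF v that] len by simp
  qed
  then show False using dist_le_edge[OF v w] len by simp
qed

lemma separated_far_horizons:
  assumes sep: "separated"
    and v: "reach_s \<sigma> v" and vy: "{v, y} \<in> E" and "t < y"
    and w: "reach_t \<tau> w" and zw: "{z, w} \<in> E" and "z < s"
    and len: "\<sigma> + \<tau> + 3 \<le> d"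
  shows "\<sigma> + \<tau> + 3 = d \<and> v < w \<and> t \<le> rhorizon V E v \<and> lhorizon V E w \<le> s"
proof -
  have zv: "z < v" using separated_below_neighbour_lt[OF sep v w zw \<open>z < s\<close> len] .
  have vw: "v < w" using separated_less[OF sep _ v w] len by simp
  have wy: "w < y" using separated_lt_above_neighbour[OF sep v vy \<open>t < y\<close> w len] .
  have "{z, y} \<in> E" using X_property_edge[OF X simple zv vw wy zw vy] .
  then have "walk_le E V (Suc (Suc \<sigma>)) s z"
    using walk_le_in_graph[OF simple v s_in_V] vy simple_graph_edgeD[OF simple]
    by (auto simp: insert_commute intro!: walk_le.step)
  from dist_le_edge[OF this w zw] have "d \<le> \<sigma> + \<tau> + 3" by simp
  moreover have "t \<le> rhorizon V E v"
    using le_rhorizon[OF simple, of y v] vy \<open>t < y\<close> by (simp add: insert_commute)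
  moreover have "lhorizon V E w \<le> s" using lhorizon_le[OF simple zw] \<open>z < s\<close> by simp
  ultimately show ?thesis using len vw by simp
qed

definition geodesic :: "(nat \<Rightarrow> 'a) \<Rightarrow> bool" where
  "geodesic f \<longleftrightarrow> f 0 = s \<and> f d = t \<and> (\<forall>i<d. {f i, f (Suc i)} \<in> E) \<and> (\<forall>i\<le>d. f i \<in> V)"

lemma geodesic_exists: "\<exists>f. geodesic f"
proof -
  obtain n f where n: "n \<le> d" "f 0 = s" "f n = t" "\<forall>i<n. {f i, f (Suc i)} \<in> E" "\<forall>i\<le>n. f i \<in> V"
    using walk_le_sequenceE[OF walk_le_dist] by metis
  then have "walk_le E V n s t" using walk_le_of_sequence[where i = 0 and j = n and f = f and U = V] by auto
  then have "d \<le> n" using dist_le[of V n t V 0] t_in_V by (simp add: walk_le.refl)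
  with n have "geodesic f" unfolding geodesic_def by auto
  then show ?thesis by blast
qed

lemma geodesic_walk_le:
  assumes "geodesic f" and "i \<le> j" and "j \<le> d" and "\<And>l. i \<le> l \<Longrightarrow> l \<le> j \<Longrightarrow> f l \<in> U"
  shows "walk_le E U (j - i) (f i) (f j)"
proof (rule walk_le_of_sequence[OF assms(2) _ assms(4)])
  show "{f l, f (Suc l)} \<in> E" if "i \<le> l" "l < j" for l
    using assms(1,3) that unfolding geodesic_def by auto
qed

lemma geodesic_reach_s:
  assumes f: "geodesic f" and "k \<le> d" and "\<forall>i\<le>k. f i \<le> t"
  shows "reach_s k (f k)"
proof -
  have "walk_le E {v \<in> V. v \<le> t} (k - 0) (f 0) (f k)"
    using assms f by (intro geodesic_walk_le) (auto simp: geodesic_def)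
  then show ?thesis using f by (simp add: geodesic_def)
qed

lemma geodesic_reach_t:
  assumes f: "geodesic f" and "k \<le> d" and "\<forall>i. k \<le> i \<and> i \<le> d \<longrightarrow> s \<le> f i"
  shows "reach_t (d - k) (f k)"
proof -
  have "walk_le E {v \<in> V. s \<le> v} (d - k) (f k) (f d)"
    using assms f by (intro geodesic_walk_le) (auto simp: geodesic_def)
  then show ?thesis using f by (simp add: geodesic_def walk_le_sym)
qed

lemma geodesic_first_above:
  assumes "separated" and f: "geodesic f"
  obtains m where "m \<le> d" "t < f m" "\<forall>i<m. f i \<le> t"
proof -
  have "\<exists>m\<le>d. t < f m"
  proof (rule ccontr)
    assume "\<not> (\<exists>m\<le>d. t < f m)"
    then have "reach_s d (f d)" using geodesic_reach_s[OF f, of d] by (simp add: not_less)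
    then have "reach_s d t" using f by (simp add: geodesic_def)
    then have "t \<le> \<beta>\<^sub>s d" by (rule le_beta_s)
    moreover have "\<beta>\<^sub>s d < \<beta>\<^sub>t (d - d)" using assms(1) unfolding separated_def by blast
    ultimately show False by (simp add: beta_t_0)
  qed
  then obtain m0 where "m0 \<le> d" "t < f m0" by blast
  moreover obtain m where "m \<le> m0" "\<forall>i<m. \<not> t < f i" "t < f m"
    using ex_least_nat_le[of "\<lambda>m. t < f m", OF \<open>t < f m0\<close>] by blast
  ultimately show ?thesis using that[of m] by (simp add: not_less)
qed

lemma geodesic_last_below:
  assumes "separated" and f: "geodesic f"
  obtains l where "l < d" "f l < s" "\<forall>i. l < i \<and> i \<le> d \<longrightarrow> s \<le> f i"
proof -
  have "\<exists>l\<le>d. f l < s"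
  proof (rule ccontr)
    assume "\<not> (\<exists>l\<le>d. f l < s)"
    then have "reach_t (d - 0) (f 0)" using geodesic_reach_t[OF f, of 0] by (simp add: not_less)
    then have "reach_t d s" using f by (simp add: geodesic_def)
    then have "\<beta>\<^sub>t d \<le> s" by (rule beta_t_le)
    moreover have "\<beta>\<^sub>s 0 < \<beta>\<^sub>t (d - 0)" using assms(1) unfolding separated_def by blast
    ultimately show False by (simp add: beta_s_0)
  qed
  then obtain l0 where "l0 \<le> d" "f l0 < s" by blast
  then obtain l where l: "l \<le> d" "f l < s" "\<And>i. i \<le> d \<Longrightarrow> f i < s \<Longrightarrow> i \<le> l"
    using Nat.ex_has_greatest_nat[of "\<lambda>l. l \<le> d \<and> f l < s" l0 d] by blast
  moreover have "l \<noteq> d" using l(2) f s_less_t by (auto simp: geodesic_def)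
  ultimately show ?thesis using that by (meson le_less not_le)
qed

lemma geodesic_exit_before_entry:
  assumes sep: "separated" and f: "geodesic f"
    and "m < l" and "l < d" and "t < f m" and "f l < s"
    and before_m: "\<forall>i<m. f i \<le> t" and after_l: "\<forall>i. l < i \<and> i \<le> d \<longrightarrow> s \<le> f i"
  shows "\<exists>\<sigma> \<tau> v w. \<sigma> + \<tau> + 3 = d
            \<and> v \<in> {\<alpha>\<^sub>s \<sigma>, \<beta>\<^sub>s \<sigma>}
            \<and> w \<in> {\<alpha>\<^sub>t \<tau>, \<beta>\<^sub>t \<tau>}
            \<and> v < w \<and> t \<le> rhorizon V E v \<and> lhorizon V E w \<le> s"
proof -
  have edge: "i < d \<Longrightarrow> {f i, f (Suc i)} \<in> E" for i using f by (simp add: geodesic_def)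
  have "f 0 = s" using f by (simp add: geodesic_def)
  then have "m \<noteq> 0" using \<open>t < f m\<close> s_less_t by (metis not_less_iff_gr_or_eq)
  have "reach_s (m - 1) (f (m - 1))"
    using geodesic_reach_s[OF f] before_m \<open>m < l\<close> \<open>l < d\<close> \<open>m \<noteq> 0\<close> by simp
  moreover have "{f (m - 1), f m} \<in> E" using edge[of "m - 1"] \<open>m \<noteq> 0\<close> \<open>m < l\<close> \<open>l < d\<close> by simp
  moreover have "walk_le E V (d - m) t (f m)"
    using walk_le_sym[OF geodesic_walk_le[OF f, of m d]] f \<open>m < l\<close> \<open>l < d\<close>
    by (auto simp: geodesic_def)
  ultimately have "\<exists>v\<in>{\<alpha>\<^sub>s (m - 1), \<beta>\<^sub>s (m - 1)}. {v, f m} \<in> E"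
    using exit_above_adjacent[OF _ _ \<open>t < f m\<close>] \<open>m \<noteq> 0\<close> \<open>m < l\<close> \<open>l < d\<close> by simp
  then obtain v where v: "v \<in> {\<alpha>\<^sub>s (m - 1), \<beta>\<^sub>s (m - 1)}" "{v, f m} \<in> E" ..
  have "reach_t (d - Suc l) (f (Suc l))" using geodesic_reach_t[OF f] after_l \<open>l < d\<close> by simp
  moreover have "walk_le E V l s (f l)"
    using geodesic_walk_le[OF f, of 0 l V] f \<open>l < d\<close> by (auto simp: geodesic_def)
  ultimately have "\<exists>w\<in>{\<alpha>\<^sub>t (d - Suc l), \<beta>\<^sub>t (d - Suc l)}. {f l, w} \<in> E"
    using entry_below_adjacent[OF _ edge \<open>f l < s\<close>] \<open>l < d\<close> by simp
  then obtain w where w: "w \<in> {\<alpha>\<^sub>t (d - Suc l), \<beta>\<^sub>t (d - Suc l)}" "{f l, w} \<in> E" ..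
  have "reach_s (m - 1) v" using v(1) reach_s_alpha_s reach_s_beta_s by auto
  moreover have "reach_t (d - Suc l) w" using w(1) reach_t_alpha_t reach_t_beta_t by auto
  moreover have "m - 1 + (d - Suc l) + 3 \<le> d" using \<open>m < l\<close> \<open>l < d\<close> \<open>m \<noteq> 0\<close> by linarith
  ultimately have "m - 1 + (d - Suc l) + 3 = d \<and> v < w \<and> t \<le> rhorizon V E v \<and> lhorizon V E w \<le> s"
    by (rule separated_far_horizons[OF sep _ v(2) \<open>t < f m\<close> _ w(2) \<open>f l < s\<close>])
  with v(1) w(1) show ?thesis by blast
qed

lemma separated_cases:
  assumes sep: "separated"
  shows "(\<exists>\<sigma> \<tau>. \<sigma> + \<tau> + 1 = d \<and> {\<alpha>\<^sub>s \<sigma>, \<alpha>\<^sub>t \<tau>} \<in> E)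
       \<or> (\<exists>\<sigma> \<tau> v w. \<sigma> + \<tau> + 3 = d
            \<and> v \<in> {\<alpha>\<^sub>s \<sigma>, \<beta>\<^sub>s \<sigma>}
            \<and> w \<in> {\<alpha>\<^sub>t \<tau>, \<beta>\<^sub>t \<tau>}
            \<and> v < w \<and> t \<le> rhorizon V E v \<and> lhorizon V E w \<le> s)"
proof -
  obtain f where f: "geodesic f" using geodesic_exists ..
  obtain m where m: "m \<le> d" "t < f m" "\<forall>i<m. f i \<le> t"
    by (rule geodesic_first_above[OF sep f])
  obtain l where l: "l < d" "f l < s" "\<forall>i. l < i \<and> i \<le> d \<longrightarrow> s \<le> f i"
    by (rule geodesic_last_below[OF sep f])
  have "m \<noteq> l" using m(2) l(2) s_less_t by auto
  then consider "Suc l < m" | "m = Suc l" | "m < l" by linarith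
  then show ?thesis
  proof cases
    case 1
    have "reach_s (Suc l) (f (Suc l))" using geodesic_reach_s[OF f] m 1 by simp
    moreover have "reach_t (d - Suc l) (f (Suc l))" using geodesic_reach_t[OF f] l by simp
    ultimately have "f (Suc l) < f (Suc l)" by (rule separated_less[OF sep, rotated]) (use l(1) in simp)
    then show ?thesis by simp
  next
    case 2
    have "reach_s l (f l)" using geodesic_reach_s[OF f] m 2 by simp
    moreover have "reach_t (d - Suc l) (f (Suc l))" using geodesic_reach_t[OF f] l by simp
    moreover have "{f l, f (Suc l)} \<in> E" using f l(1) by (simp add: geodesic_def)
    ultimately have "{\<alpha>\<^sub>s l, \<alpha>\<^sub>t (d - Suc l)} \<in> E"
      using alpha_edge_of_crossing_edge[OF _ _ _ l(2)] m(2) l(1) 2 by simp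
    then show ?thesis using l(1) by (intro disjI1 exI[of _ l] exI[of _ "d - Suc l"]) simp
  next
    case 3
    with geodesic_exit_before_entry[OF sep f _ l(1) m(2) l(2) m(3) l(3)] show ?thesis by blast
  qed
qed

end

theorem lemma13:
  fixes V :: "'a::linorder set" and E :: "'a set set" and s t :: 'a
  assumes "simple_graph V E"
    and "X_property V E"
    and "s \<in> V" and "t \<in> V" and "s < t"
    and "\<exists>k. reach_within V E V k s t"
    and "d = graph_dist V E s t"
  shows "(\<exists>\<sigma> \<tau>. \<sigma> + \<tau> = d \<and> beta_s V E s t \<sigma> = beta_t V E s t \<tau>)
       \<or> (\<exists>\<sigma> \<tau>. \<sigma> + \<tau> + 1 = d \<and> {alpha_s V E s t \<sigma>, alpha_t V E s t \<tau>} \<in> E)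
       \<or> (\<exists>\<sigma> \<tau> v w. \<sigma> + \<tau> + 3 = d
            \<and> v \<in> {alpha_s V E s t \<sigma>, beta_s V E s t \<sigma>}
            \<and> w \<in> {alpha_t V E s t \<tau>, beta_t V E s t \<tau>}
            \<and> v < w \<and> t \<le> rhorizon V E v \<and> lhorizon V E w \<le> s)"
proof -
  interpret X_graph_pair V E s t
    using assms(1-6) by unfold_locales
  from meet_or_separated show ?thesis
  proof
    assume "\<exists>\<sigma>\<le>graph_dist V E s t. beta_s V E s t \<sigma> = beta_t V E s t (graph_dist V E s t - \<sigma>)"
    then show ?thesis using assms(7) by (metis le_add_diff_inverse)
  next
    assume separated
    then show ?thesis using separated_cases assms(7) by simp
  qed
qed

end
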